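(* Let $r,n\in\mathbb{N}$ with $r\leq n$, and let $\mathbf{s}=(s_1,\ldots,s_r)$ and $\mathbf{t}=(t_1,\ldots,t_r)$ be $r$-tuples of positive integers such that $\mathbf{s}\geq\mathbf{t}$. Then $\overline{H}_n(s_1,\ldots,s_r)\leq\overline{H}_n(t_1,\ldots,t_r)$.
   Context: $\mathbb{N}$ is the set of positive integers. $\overline{H}_n(s_1,\ldots,s_r)=\sum_{0\leq k_1<\cdots<k_r\leq n-1}\prod_{j=1}^r (2k_j+1)^{-s_j}$. For $r$-tuples of positive integers, $\mathbf{s}\geq\mathbf{t}$ means: $s_1+\cdots+s_r\geq t_1+\cdots+t_r$, and there is some $0\leq l\leq r-1$ with $s_i\leq t_i$ for $1\leq i\leq l$ and $s_i\geq t_i$ for $l+1\leq i\leq r$. *)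

theory Defs
  imports "HOL-Analysis.Analysis"
begin

text \<open>Tuples (s_1,...,s_r) are represented as functions nat => nat, read on indices 1..r.
  Hbar n r s = sum over 0 <= k_1 < ... < k_r <= n-1 of prod_j (2 k_j + 1)^(-s_j).\<close>

definition Hbar :: "nat \<Rightarrow> nat \<Rightarrow> (nat \<Rightarrow> nat) \<Rightarrow> real" where
  "Hbar n r s = (\<Sum>k \<in> {k \<in> {1..r} \<rightarrow>\<^sub>E {0..<n}.
        \<forall>i\<in>{1..r}. \<forall>j\<in>{1..r}. i < j \<longrightarrow> k i < k j}.
      \<Prod>j=1..r. 1 / (2 * real (k j) + 1) ^ s j)"

definition tuple_ge :: "nat \<Rightarrow> (nat \<Rightarrow> nat) \<Rightarrow> (nat \<Rightarrow> nat) \<Rightarrow> bool" where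
  "tuple_ge r s t \<longleftrightarrow>
     (\<Sum>i=1..r. s i) \<ge> (\<Sum>i=1..r. t i) \<and>
     (\<exists>l. l \<le> r - 1 \<and> (\<forall>i\<in>{1..l}. s i \<le> t i) \<and> (\<forall>i\<in>{l+1..r}. s i \<ge> t i))"

end

theory Submission
  imports Defs
begin

text \<open>The factors y_j = 2 k_j + 1 of a summand increase with j. Take the pivot b = y_(l+1),
  where l witnesses s \<ge> t: for j \<le> l we have y_j \<le> b and s_j \<le> t_j, for j > l we have
  y_j \<ge> b and s_j \<ge> t_j, so in both cases y_j^t_j b^s_j \<le> y_j^s_j b^t_j. Multiplying over j
  and using b \<ge> 1 and \<Sigma>s \<ge> \<Sigma>t gives \<Prod> y_j^t_j \<le> \<Prod> y_j^s_j, i.e. each summand of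
  Hbar n r s is at most the corresponding summand of Hbar n r t.\<close>

lemma power_swap_le:
  fixes y b :: "'a::linordered_semidom"
  assumes "0 \<le> y" "0 \<le> b" "(y \<le> b \<and> s \<le> t) \<or> (b \<le> y \<and> t \<le> s)"
  shows "y ^ t * b ^ s \<le> y ^ s * b ^ t"
  using assms(3)
proof
  assume "y \<le> b \<and> s \<le> t"
  then obtain d where "t = s + d" and "y ^ d \<le> b ^ d"
    using assms(1) le_Suc_ex power_mono by blast
  then have "(y ^ s * b ^ s) * y ^ d \<le> (y ^ s * b ^ s) * b ^ d"
    using assms(1,2) by (simp add: mult_left_mono)
  then show ?thesis
    using \<open>t = s + d\<close> by (simp add: power_add ac_simps)
next
  assume "b \<le> y \<and> t \<le> s"
  then obtain d where "s = t + d" and "b ^ d \<le> y ^ d"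
    using assms(2) le_Suc_ex power_mono by blast
  then have "(y ^ t * b ^ t) * b ^ d \<le> (y ^ t * b ^ t) * y ^ d"
    using assms(1,2) by (simp add: mult_left_mono)
  then show ?thesis
    using \<open>s = t + d\<close> by (simp add: power_add ac_simps)
qed

lemma prod_power_le_if_tuple_ge:
  fixes y :: "nat \<Rightarrow> 'a::linordered_semidom"
  assumes "tuple_ge r s t" and "mono_on {1..r} y" and "\<forall>j\<in>{1..r}. 1 \<le> y j"
  shows "(\<Prod>j=1..r. y j ^ t j) \<le> (\<Prod>j=1..r. y j ^ s j)"
proof (cases "r = 0")
  case False
  obtain l where l: "l \<le> r - 1" "\<forall>i\<in>{1..l}. s i \<le> t i" "\<forall>i\<in>{l+1..r}. t i \<le> s i"
    and sums: "(\<Sum>i=1..r. t i) \<le> (\<Sum>i=1..r. s i)"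
    using assms(1) unfolding tuple_ge_def by blast
  define b where "b = y (l + 1)"
  have b: "1 \<le> b"
    using assms(3) False l(1) unfolding b_def by simp
  have y_nonneg: "0 \<le> y j" if "j \<in> {1..r}" for j
    using assms(3) that order_trans zero_le_one by blast
  have b_pos: "0 < b"
    using b order_less_le_trans zero_less_one by blast
  have swap: "y j ^ t j * b ^ s j \<le> y j ^ s j * b ^ t j" if j: "j \<in> {1..r}" for j
  proof (rule power_swap_le)
    show "0 \<le> y j" "0 \<le> b"
      using y_nonneg j b_pos by auto
    have "y j \<le> b" if "j \<le> l"
      using mono_onD[OF assms(2)] j that l(1) unfolding b_def by auto
    moreover have "b \<le> y j" if "\<not> j \<le> l"
      using mono_onD[OF assms(2)] j that False unfolding b_def by auto
    ultimately show "(y j \<le> b \<and> s j \<le> t j) \<or> (b \<le> y j \<and> t j \<le> s j)"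
      using l(2,3) j by force
  qed
  have "(\<Prod>j=1..r. y j ^ t j * b ^ s j) \<le> (\<Prod>j=1..r. y j ^ s j * b ^ t j)"
    using swap y_nonneg b_pos by (intro prod_mono) auto
  then have "(\<Prod>j=1..r. y j ^ t j) * b ^ (\<Sum>i=1..r. s i)
      \<le> (\<Prod>j=1..r. y j ^ s j) * b ^ (\<Sum>i=1..r. t i)"
    by (simp add: prod.distrib power_sum)
  also have "\<dots> \<le> (\<Prod>j=1..r. y j ^ s j) * b ^ (\<Sum>i=1..r. s i)"
    by (rule mult_left_mono[OF power_increasing[OF sums b] prod_nonneg])
      (use y_nonneg in simp)
  finally show ?thesis
    by (rule mult_right_le_imp_le) (use b_pos in simp)
qed simp

theorem lemma2p2:
  fixes r n :: nat and s t :: "nat \<Rightarrow> nat"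
  assumes "1 \<le> r" and "r \<le> n"
    and "\<forall>i\<in>{1..r}. s i \<ge> 1" and "\<forall>i\<in>{1..r}. t i \<ge> 1"
    and "tuple_ge r s t"
  shows "Hbar n r s \<le> Hbar n r t"
  unfolding Hbar_def
proof (rule sum_mono)
  fix k assume "k \<in> {k \<in> {1..r} \<rightarrow>\<^sub>E {0..<n}. \<forall>i\<in>{1..r}. \<forall>j\<in>{1..r}. i < j \<longrightarrow> k i < k j}"
  then have "mono_on {1..r} (\<lambda>j. 2 * real (k j) + 1)"
    by (auto intro!: mono_onI simp: le_less)
  then have "(\<Prod>j=1..r. (2 * real (k j) + 1) ^ t j) \<le> (\<Prod>j=1..r. (2 * real (k j) + 1) ^ s j)"
    by (rule prod_power_le_if_tuple_ge[OF assms(5)]) simp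
  then have "1 / (\<Prod>j=1..r. (2 * real (k j) + 1) ^ s j) \<le> 1 / (\<Prod>j=1..r. (2 * real (k j) + 1) ^ t j)"
    by (rule divide_left_mono) (auto intro!: mult_pos_pos prod_pos)
  then show "(\<Prod>j=1..r. 1 / (2 * real (k j) + 1) ^ s j) \<le> (\<Prod>j=1..r. 1 / (2 * real (k j) + 1) ^ t j)"
    by (simp add: prod_dividef)
qed

end
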